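(* Let $n_1,n_2,n_3$ be integers with $3\le n_1,n_2\le n_3$. If $3\max(n_1,n_2)\le 2n_3\le n_1n_2$, then for $G=K_{n_1+1}\times K_{n_2+1}\times K_{n_3+1}$ the metric dimension $\dim(G)$, the location-domination number $\gamma^L(G)$, and the location-total-domination number $\gamma^L_t(G)$ are all equal to $2(n_3+1)-1$.
   Context: $K_{m_1}\times K_{m_2}\times K_{m_3}$: vertices are triples $(x_1,x_2,x_3)$, $1\le x_i\le m_i$, adjacent iff they differ in every coordinate. A set $W$ of vertices is resolving if for every two distinct vertices $x,y\notin W$ some $w\in W$ has $d(x,w)\ne d(y,w)$; $\dim(G)$ is the minimum size of a resolving set. A dominating set is a vertex set $D$ such that every vertex is in $D$ or adjacent to a vertex of $D$; a total-dominating set is one such that every vertex is adjacent to a vertex of $D$. A locating-dominating (resp. locating-total-dominating) set is a resolving set that is also dominating (resp. total-dominating); $\gamma^L(G)$ (resp. $\gamma^L_t(G)$) is the minimum size of such a set. *)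

theory Defs
  imports Main "HOL-Library.Extended_Nat"
begin

fun walk :: "'a set \<Rightarrow> ('a \<Rightarrow> 'a \<Rightarrow> bool) \<Rightarrow> nat \<Rightarrow> 'a \<Rightarrow> 'a \<Rightarrow> bool" where
  "walk V E 0 x y = (x \<in> V \<and> x = y)"
| "walk V E (Suc k) x y = (\<exists>z. x \<in> V \<and> E x z \<and> walk V E k z y)"

definition gdist :: "'a set \<Rightarrow> ('a \<Rightarrow> 'a \<Rightarrow> bool) \<Rightarrow> 'a \<Rightarrow> 'a \<Rightarrow> enat" where
  "gdist V E x y = (if \<exists>k. walk V E k x y then enat (LEAST k. walk V E k x y) else \<infinity>)"

definition resolving :: "'a set \<Rightarrow> ('a \<Rightarrow> 'a \<Rightarrow> bool) \<Rightarrow> 'a set \<Rightarrow> bool" where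
  "resolving V E W \<longleftrightarrow> W \<subseteq> V \<and>
     (\<forall>x\<in>V - W. \<forall>y\<in>V - W. x \<noteq> y \<longrightarrow> (\<exists>w\<in>W. gdist V E x w \<noteq> gdist V E y w))"

definition dominating :: "'a set \<Rightarrow> ('a \<Rightarrow> 'a \<Rightarrow> bool) \<Rightarrow> 'a set \<Rightarrow> bool" where
  "dominating V E D \<longleftrightarrow> D \<subseteq> V \<and> (\<forall>v\<in>V. v \<in> D \<or> (\<exists>d\<in>D. E v d))"

definition total_dominating :: "'a set \<Rightarrow> ('a \<Rightarrow> 'a \<Rightarrow> bool) \<Rightarrow> 'a set \<Rightarrow> bool" where
  "total_dominating V E D \<longleftrightarrow> D \<subseteq> V \<and> (\<forall>v\<in>V. \<exists>d\<in>D. E v d)"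

definition metric_dim :: "'a set \<Rightarrow> ('a \<Rightarrow> 'a \<Rightarrow> bool) \<Rightarrow> nat" where
  "metric_dim V E = Inf {card W | W. resolving V E W}"

definition loc_dom_number :: "'a set \<Rightarrow> ('a \<Rightarrow> 'a \<Rightarrow> bool) \<Rightarrow> nat" where
  "loc_dom_number V E = Inf {card W | W. resolving V E W \<and> dominating V E W}"

definition loc_tdom_number :: "'a set \<Rightarrow> ('a \<Rightarrow> 'a \<Rightarrow> bool) \<Rightarrow> nat" where
  "loc_tdom_number V E = Inf {card W | W. resolving V E W \<and> total_dominating V E W}"

(* K_{m1} x K_{m2} x K_{m3} (direct product of complete graphs) *)
definition KKK_verts :: "nat \<Rightarrow> nat \<Rightarrow> nat \<Rightarrow> (nat \<times> nat \<times> nat) set" where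
  "KKK_verts m1 m2 m3 = {1..m1} \<times> {1..m2} \<times> {1..m3}"

definition KKK_adj :: "(nat \<times> nat \<times> nat) \<Rightarrow> (nat \<times> nat \<times> nat) \<Rightarrow> bool" where
  "KKK_adj x y \<longleftrightarrow> fst x \<noteq> fst y \<and> fst (snd x) \<noteq> fst (snd y) \<and> snd (snd x) \<noteq> snd (snd y)"

end

theory Submission
  imports Defs "HOL-Library.Disjoint_Sets"
begin

text \<open>
  Any two distinct vertices of \<open>K\<^sub>m\<^sub>1 \<times> K\<^sub>m\<^sub>2 \<times> K\<^sub>m\<^sub>3\<close> (all \<open>m\<^sub>i \<ge> 3\<close>) are at distance 1 or 2,
  and at distance 2 exactly when they share a coordinate. So \<open>W\<close> is resolving iff the vertices
  outside \<open>W\<close> are told apart by the set of members of \<open>W\<close> they share a coordinate with.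

  Lower bound: if two layers (vertices with fixed third coordinate) contained together at most
  two vertices of \<open>W\<close>, the two vertices in these layers above a cell meeting the cells of both
  would not be resolved. Hence any two layers contain at least three vertices of \<open>W\<close>, and
  summing over the \<open>n\<^sub>3 + 1\<close> layers gives \<open>|W| \<ge> 2(n\<^sub>3 + 1) - 1\<close>.

  Upper bound: in each of the first \<open>n\<^sub>3\<close> layers take two opposite corners of a rectangle of the
  \<open>n\<^sub>1 \<times> n\<^sub>2\<close> grid, and in the last layer one vertex outside the grid. If the \<open>2n\<^sub>3\<close> corners
  are distinct, the \<open>2n\<^sub>3\<close> other corners of the rectangles are distinct, and every row and every
  column of the grid meets three rectangles, this set is resolving and totally dominating.
  Such rectangles are built as diagonal dominoes between adjacent columns, stacked in bands
  of two rows with a three-row gadget when \<open>n\<^sub>1\<close> is odd; \<open>3 max n\<^sub>1 n\<^sub>2 \<le> 2n\<^sub>3\<close> is what the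
  covering needs and \<open>2n\<^sub>3 \<le> n\<^sub>1 n\<^sub>2\<close> what leaves room for the \<open>2n\<^sub>3\<close> corners.
\<close>

lemma ex_avoiding_two:
  assumes "3 \<le> (m::nat)"
  shows "\<exists>c\<in>{1..m}. c \<noteq> a \<and> c \<noteq> b"
proof -
  have "\<exists>c\<in>{1, 2, 3}. c \<noteq> a \<and> c \<noteq> b" by auto
  then show ?thesis using assms by auto
qed

lemma card_le_2_subset_doubletonE:
  assumes "finite S" "card S \<le> 2" "S \<subseteq> A" "A \<noteq> {}"
  obtains u v where "u \<in> A" "v \<in> A" "S \<subseteq> {u, v}"
proof -
  from assms(2) consider "card S = 0" | "card S = 1" | "card S = 2" by linarith
  then show ?thesis
  proof cases
    case 1
    then show ?thesis using assms that by auto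
  next
    case 2
    then show ?thesis using assms(3) that by (auto simp: card_1_singleton_iff)
  next
    case 3
    then show ?thesis using assms(3) that by (auto simp: card_2_iff)
  qed
qed

lemma obtain_three_distinct:
  assumes "3 \<le> card S"
  obtains x y z where "x \<in> S" "y \<in> S" "z \<in> S" "distinct [x, y, z]"
proof -
  obtain T where "T \<subseteq> S" "card T = 3"
    using assms by (meson obtain_subset_with_card_n)
  then show ?thesis using that by (auto simp: card_3_iff)
qed

lemma three_le_card:
  assumes "finite S" "x \<in> S" "y \<in> S" "z \<in> S" "distinct [x, y, z]"
  shows "3 \<le> card S"
proof -
  have "card {x, y, z} = 3" using assms(5) by simp
  moreover have "card {x, y, z} \<le> card S" using assms(1-4) by (intro card_mono) auto
  ultimately show ?thesis by simp
qed

lemma obtain_subset_between: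
  assumes "finite M" "C \<subseteq> M" "card C \<le> n" "n \<le> card M"
  obtains S where "C \<subseteq> S" "S \<subseteq> M" "card S = n"
proof -
  have "finite C" using assms(1,2) by (rule finite_subset[rotated])
  then have "n - card C \<le> card (M - C)"
    using assms by (simp add: card_Diff_subset)
  then obtain E where E: "E \<subseteq> M - C" "card E = n - card C"
    by (meson obtain_subset_with_card_n)
  then have "finite E" using assms(1) by (meson finite_Diff finite_subset)
  then have "card (C \<union> E) = n"
    using \<open>finite C\<close> E assms(3) by (subst card_Un_disjoint) auto
  then show ?thesis using that[of "C \<union> E"] E(1) assms(2) by blast
qed

lemma sum_ge_of_pairwise_sum_ge:
  fixes f :: "'a \<Rightarrow> nat"
  assumes "finite I" "2 \<le> card I"
    and pair: "\<And>i j. i \<in> I \<Longrightarrow> j \<in> I \<Longrightarrow> i \<noteq> j \<Longrightarrow> 3 \<le> f i + f j"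
  shows "2 * card I - 1 \<le> sum f I"
proof (cases "\<exists>i\<in>I. f i \<le> 1")
  case True
  then obtain i where i: "i \<in> I" "f i \<le> 1" by blast
  have "\<forall>j\<in>I - {i}. 3 - f i \<le> f j" using pair i(1) by fastforce
  then have "(card I - 1) * (3 - f i) \<le> sum f (I - {i})"
    using sum_bounded_below[of "I - {i}" "3 - f i" f] i(1) assms(1) by simp
  moreover have "sum f I = f i + sum f (I - {i})" using assms(1) i(1) by (simp add: sum.remove)
  ultimately show ?thesis using i(2) assms(2) by (cases "f i") (auto simp: algebra_simps)
next
  case False
  then have "card I * 2 \<le> sum f I" using sum_bounded_below[of I 2 f] by fastforce
  then show ?thesis by linarith
qed

lemma disjoint_family_on_image_transport:
  assumes "disjoint_family_on F P" "inj \<phi>" "\<And>e. e \<in> P \<Longrightarrow> G (h e) = \<phi> ` F e"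
  shows "disjoint_family_on G (h ` P)"
  unfolding disjoint_family_on_def
proof (intro ballI impI)
  fix x y assume "x \<in> h ` P" "y \<in> h ` P" "x \<noteq> y"
  then obtain a b where "a \<in> P" "b \<in> P" "x = h a" "y = h b" "a \<noteq> b" by blast
  then show "G x \<inter> G y = {}"
    using assms by (simp add: disjoint_family_on_def image_Int[symmetric])
qed

lemma card_filter_image:
  assumes "inj_on h P"
  shows "card {x \<in> h ` P. R x} = card {e \<in> P. R (h e)}"
proof -
  have "{x \<in> h ` P. R x} = h ` {e \<in> P. R (h e)}" by blast
  then show ?thesis using assms by (simp add: card_image inj_on_subset)
qed

lemma Suc_mod_inj:
  fixes x y q :: nat
  assumes "x < q" "y < q" "Suc x mod q = Suc y mod q"
  shows "x = y"
  using assms by (cases "Suc x = q"; cases "Suc y = q") auto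

lemma Inf_card_eq:
  assumes "Q W0" "card W0 = k" "\<And>W. Q W \<Longrightarrow> k \<le> card W"
  shows "Inf {card W | W. Q W} = k"
  using assms by (intro cInf_eq_minimum) auto

section \<open>Distances in the direct product of three complete graphs\<close>

lemma total_dominating_imp_dominating: "total_dominating V E D \<Longrightarrow> dominating V E D"
  by (auto simp: total_dominating_def dominating_def)

definition share_coord :: "nat \<times> nat \<times> nat \<Rightarrow> nat \<times> nat \<times> nat \<Rightarrow> bool" where
  "share_coord x y \<longleftrightarrow> fst x = fst y \<or> fst (snd x) = fst (snd y) \<or> snd (snd x) = snd (snd y)"

lemma KKK_adj_iff_not_share_coord: "KKK_adj x y \<longleftrightarrow> \<not> share_coord x y"
  unfolding KKK_adj_def share_coord_def by auto

lemma KKK_common_neighbour: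
  assumes "3 \<le> m1" "3 \<le> m2" "3 \<le> m3" "x \<in> KKK_verts m1 m2 m3" "y \<in> KKK_verts m1 m2 m3"
  shows "\<exists>z\<in>KKK_verts m1 m2 m3. KKK_adj x z \<and> KKK_adj z y"
proof -
  obtain z1 where "z1 \<in> {1..m1}" "z1 \<noteq> fst x" "z1 \<noteq> fst y"
    using ex_avoiding_two[OF assms(1)] by blast
  moreover obtain z2 where "z2 \<in> {1..m2}" "z2 \<noteq> fst (snd x)" "z2 \<noteq> fst (snd y)"
    using ex_avoiding_two[OF assms(2)] by blast
  moreover obtain z3 where "z3 \<in> {1..m3}" "z3 \<noteq> snd (snd x)" "z3 \<noteq> snd (snd y)"
    using ex_avoiding_two[OF assms(3)] by blast
  ultimately show ?thesis
    by (intro bexI[of _ "(z1, z2, z3)"]) (auto simp: KKK_adj_def KKK_verts_def)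
qed

lemma walk_1_iff: "walk V E 1 x y \<longleftrightarrow> x \<in> V \<and> E x y \<and> y \<in> V"
  by simp

lemma walk_2I: "x \<in> V \<Longrightarrow> z \<in> V \<Longrightarrow> y \<in> V \<Longrightarrow> E x z \<Longrightarrow> E z y \<Longrightarrow> walk V E 2 x y"
  by (auto simp: numeral_2_eq_2)

lemma gdist_eq_enat:
  assumes "walk V E k x y" "\<And>j. j < k \<Longrightarrow> \<not> walk V E j x y"
  shows "gdist V E x y = enat k"
proof -
  have "(LEAST j. walk V E j x y) = k"
    using assms by (intro Least_equality) (auto simp: not_less[symmetric])
  then show ?thesis using assms(1) unfolding gdist_def by auto
qed

lemma gdist_KKK:
  assumes "3 \<le> m1" "3 \<le> m2" "3 \<le> m3" and xy: "x \<in> KKK_verts m1 m2 m3" "y \<in> KKK_verts m1 m2 m3"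
  shows "gdist (KKK_verts m1 m2 m3) KKK_adj x y =
           (if x = y then 0 else if KKK_adj x y then 1 else 2)"
proof -
  let ?V = "KKK_verts m1 m2 m3"
  have walk0: "walk ?V KKK_adj 0 x y \<longleftrightarrow> x = y"
    using xy(1) by simp
  have walk1: "walk ?V KKK_adj 1 x y \<longleftrightarrow> KKK_adj x y"
    unfolding walk_1_iff using xy by simp
  consider "x = y" | "x \<noteq> y" "KKK_adj x y" | "x \<noteq> y" "\<not> KKK_adj x y" by blast
  then show ?thesis
  proof cases
    case 1
    then have "gdist ?V KKK_adj x y = enat 0"
      using walk0 by (intro gdist_eq_enat) auto
    then show ?thesis using 1 by (simp add: zero_enat_def)
  next
    case 2
    then have "gdist ?V KKK_adj x y = enat 1"
      using walk0 walk1 by (intro gdist_eq_enat) (auto simp del: walk.simps)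
    then show ?thesis using 2 by (simp add: one_enat_def)
  next
    case 3
    obtain z where "z \<in> ?V" "KKK_adj x z" "KKK_adj z y"
      using KKK_common_neighbour[OF assms] by blast
    then have "walk ?V KKK_adj 2 x y"
      using xy by (intro walk_2I)
    moreover have "\<not> walk ?V KKK_adj j x y" if "j < 2" for j
      using that 3 walk0 walk1 by (metis One_nat_def less_2_cases)
    ultimately have "gdist ?V KKK_adj x y = enat 2"
      by (rule gdist_eq_enat)
    then show ?thesis using 3 by (simp add: numeral_eq_enat)
  qed
qed

lemma resolving_KKK_iff:
  assumes "3 \<le> m1" "3 \<le> m2" "3 \<le> m3"
  shows "resolving (KKK_verts m1 m2 m3) KKK_adj W \<longleftrightarrow>
     W \<subseteq> KKK_verts m1 m2 m3 \<and>
     (\<forall>x\<in>KKK_verts m1 m2 m3 - W. \<forall>y\<in>KKK_verts m1 m2 m3 - W.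
        (\<forall>w\<in>W. share_coord x w \<longleftrightarrow> share_coord y w) \<longrightarrow> x = y)"
proof -
  let ?V = "KKK_verts m1 m2 m3"
  have dist: "gdist ?V KKK_adj x w = (if share_coord x w then 2 else 1)"
    if "x \<in> ?V - W" "w \<in> W" "W \<subseteq> ?V" for x w
    using that gdist_KKK[OF assms, of x w] by (auto simp: KKK_adj_iff_not_share_coord)
  have separates: "(\<exists>w\<in>W. gdist ?V KKK_adj x w \<noteq> gdist ?V KKK_adj y w) \<longleftrightarrow>
      \<not> (\<forall>w\<in>W. share_coord x w \<longleftrightarrow> share_coord y w)"
    if "x \<in> ?V - W" "y \<in> ?V - W" "W \<subseteq> ?V" for x y
    using that by (auto simp: dist)
  show ?thesis
    unfolding resolving_def
  proof (intro iffI conjI ballI impI; (elim conjE)?)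
    fix x y
    assume "W \<subseteq> ?V" and "x \<in> ?V - W" "y \<in> ?V - W"
      and "\<forall>x\<in>?V - W. \<forall>y\<in>?V - W. x \<noteq> y \<longrightarrow> (\<exists>w\<in>W. gdist ?V KKK_adj x w \<noteq> gdist ?V KKK_adj y w)"
      and "\<forall>w\<in>W. share_coord x w \<longleftrightarrow> share_coord y w"
    then show "x = y" using separates by blast
  next
    fix x y
    assume "W \<subseteq> ?V" and "x \<in> ?V - W" "y \<in> ?V - W" "x \<noteq> y"
      and "\<forall>x\<in>?V - W. \<forall>y\<in>?V - W. (\<forall>w\<in>W. share_coord x w \<longleftrightarrow> share_coord y w) \<longrightarrow> x = y"
    then show "\<exists>w\<in>W. gdist ?V KKK_adj x w \<noteq> gdist ?V KKK_adj y w" using separates by blast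
  qed
qed

section \<open>The lower bound\<close>

definition layer :: "(nat \<times> nat \<times> nat) set \<Rightarrow> nat \<Rightarrow> (nat \<times> nat \<times> nat) set" where
  "layer W c = {w\<in>W. snd (snd w) = c}"

definition cell_of :: "nat \<times> nat \<times> nat \<Rightarrow> nat \<times> nat" where
  "cell_of x = (fst x, fst (snd x))"

lemma ex_cell_meeting_both:
  fixes m1 m2 :: nat
  assumes "3 \<le> m1" "3 \<le> m2" "u \<in> {1..m1} \<times> {1..m2}" "v \<in> {1..m1} \<times> {1..m2}"
  shows "\<exists>z\<in>{1..m1} \<times> {1..m2}. z \<noteq> u \<and> z \<noteq> v \<and>
           (fst z = fst u \<or> snd z = snd u) \<and> (fst z = fst v \<or> snd z = snd v)"
proof (cases "fst u = fst v \<or> snd u = snd v")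
  case True
  then show ?thesis
  proof
    assume same_row: "fst u = fst v"
    obtain b where "b \<in> {1..m2}" "b \<noteq> snd u" "b \<noteq> snd v"
      using ex_avoiding_two[OF assms(2)] by blast
    then show ?thesis using same_row assms(3,4) by (intro bexI[of _ "(fst u, b)"]) auto
  next
    assume same_col: "snd u = snd v"
    obtain a where "a \<in> {1..m1}" "a \<noteq> fst u" "a \<noteq> fst v"
      using ex_avoiding_two[OF assms(1)] by blast
    then show ?thesis using same_col assms(3,4) by (intro bexI[of _ "(a, snd u)"]) auto
  qed
next
  case False
  then show ?thesis using assms(3,4) by (intro bexI[of _ "(fst u, snd v)"]) auto
qed

text \<open>Two layers containing only two distinct cells would leave the vertices above a third
  cell meeting both of them, in these two layers, unresolved.\<close>

lemma resolving_KKK_two_layers: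
  assumes m: "3 \<le> m1" "3 \<le> m2" "3 \<le> m3"
    and res: "resolving (KKK_verts m1 m2 m3) KKK_adj W"
    and c: "c \<in> {1..m3}" "c' \<in> {1..m3}" "c \<noteq> c'"
  shows "3 \<le> card (layer W c) + card (layer W c')"
proof (rule ccontr)
  let ?V = "KKK_verts m1 m2 m3"
  let ?L = "layer W c \<union> layer W c'"
  assume few: "\<not> 3 \<le> card (layer W c) + card (layer W c')"
  have WV: "W \<subseteq> ?V" using res by (simp add: resolving_def)
  then have "finite W" by (rule finite_subset) (simp add: KKK_verts_def)
  then have fin: "finite ?L" by (simp add: layer_def)
  then have "card (cell_of ` ?L) \<le> 2"
    using few card_image_le[OF fin, of cell_of] card_Un_le[of "layer W c" "layer W c'"] by linarith
  moreover have "cell_of ` ?L \<subseteq> {1..m1} \<times> {1..m2}"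
    using WV by (auto simp: layer_def cell_of_def KKK_verts_def)
  moreover have "{1..m1} \<times> {1..m2} \<noteq> {}" using m by auto
  ultimately obtain u v where uv: "u \<in> {1..m1} \<times> {1..m2}" "v \<in> {1..m1} \<times> {1..m2}"
      "cell_of ` ?L \<subseteq> {u, v}"
    using card_le_2_subset_doubletonE[OF finite_imageI[OF fin]] by metis
  obtain z where z: "z \<in> {1..m1} \<times> {1..m2}" "z \<noteq> u" "z \<noteq> v"
      "fst z = fst u \<or> snd z = snd u" "fst z = fst v \<or> snd z = snd v"
    using ex_cell_meeting_both[OF m(1,2) uv(1,2)] by blast
  define x where "x = (fst z, snd z, c)"
  define y where "y = (fst z, snd z, c')"
  have "x \<in> ?V - W" "y \<in> ?V - W"
    using z c uv(3) by (force simp: x_def y_def KKK_verts_def layer_def cell_of_def)+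
  moreover have "x \<noteq> y" using c(3) by (simp add: x_def y_def)
  ultimately obtain w where w: "w \<in> W" "share_coord x w \<noteq> share_coord y w"
    using res resolving_KKK_iff[OF m] by blast
  show False
  proof (cases "w \<in> ?L")
    case True
    then have "cell_of w \<in> {u, v}" using uv(3) by blast
    then show False using w(2) z(4,5) by (auto simp: share_coord_def cell_of_def x_def y_def)
  next
    case False
    then show False using w by (auto simp: share_coord_def layer_def x_def y_def)
  qed
qed

lemma card_resolving_KKK_ge:
  assumes m: "3 \<le> m1" "3 \<le> m2" "3 \<le> m3"
    and res: "resolving (KKK_verts m1 m2 m3) KKK_adj W"
  shows "2 * m3 - 1 \<le> card W"
proof -
  have WV: "W \<subseteq> KKK_verts m1 m2 m3" using res by (simp add: resolving_def)
  then have "finite W" by (rule finite_subset) (simp add: KKK_verts_def)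
  moreover have "W = (\<Union>c\<in>{1..m3}. layer W c)"
    using WV by (auto simp: layer_def KKK_verts_def)
  moreover have "card (\<Union>c\<in>{1..m3}. layer W c) = (\<Sum>c\<in>{1..m3}. card (layer W c))"
    using \<open>finite W\<close> by (intro card_UN_disjoint) (auto simp: layer_def)
  ultimately have "card W = (\<Sum>c\<in>{1..m3}. card (layer W c))" by simp
  also have "2 * m3 - 1 \<le> \<dots>"
    using sum_ge_of_pairwise_sum_ge[of "{1..m3}" "\<lambda>c. card (layer W c)"]
      resolving_KKK_two_layers[OF m res] m(3) by simp
  finally show ?thesis .
qed

section \<open>Resolving sets from grid pairings\<close>

type_synonym cell = "nat \<times> nat"

definition corners :: "cell \<times> cell \<Rightarrow> cell set" where
  "corners e = {fst e, snd e}"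

definition anticorners :: "cell \<times> cell \<Rightarrow> cell set" where
  "anticorners e = {(fst (fst e), snd (snd e)), (fst (snd e), snd (fst e))}"

definition rows :: "cell \<times> cell \<Rightarrow> nat set" where
  "rows e = fst ` corners e"

definition cols :: "cell \<times> cell \<Rightarrow> nat set" where
  "cols e = snd ` corners e"

text \<open>A pair \<open>(a, b)\<close> of cells of the \<open>p \<times> q\<close> grid (indexed from 0) in different rows and
  columns spans a rectangle with corners \<open>a, b\<close> and anticorners the two other corners.\<close>

definition grid_pairing :: "nat \<Rightarrow> nat \<Rightarrow> (cell \<times> cell) set \<Rightarrow> bool" where
  "grid_pairing p q P \<longleftrightarrow>
     (\<forall>(a, b)\<in>P. a \<in> {..<p} \<times> {..<q} \<and> b \<in> {..<p} \<times> {..<q} \<and> fst a \<noteq> fst b \<and> snd a \<noteq> snd b) \<and>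
     disjoint_family_on corners P \<and> disjoint_family_on anticorners P"

definition thrice_covering :: "nat \<Rightarrow> nat \<Rightarrow> (cell \<times> cell) set \<Rightarrow> bool" where
  "thrice_covering p q P \<longleftrightarrow>
     (\<forall>r<p. 3 \<le> card {e\<in>P. r \<in> rows e}) \<and> (\<forall>j<q. 3 \<le> card {e\<in>P. j \<in> cols e})"

definition lift :: "cell \<Rightarrow> nat \<Rightarrow> nat \<times> nat \<times> nat" where
  "lift a k = (fst a + 1, snd a + 1, k + 1)"

text \<open>The \<open>k\<close>-th pair of an enumeration \<open>g\<close> of a pairing is placed in layer \<open>k + 1\<close>; the top layer
  \<open>n + 1\<close> receives the single vertex outside the grid.\<close>

definition pairing_set :: "nat \<Rightarrow> nat \<Rightarrow> nat \<Rightarrow> (nat \<Rightarrow> cell \<times> cell) \<Rightarrow> (nat \<times> nat \<times> nat) set" where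
  "pairing_set p q n g = insert (p + 1, q + 1, n + 1) (\<Union>k<n. (\<lambda>a. lift a k) ` corners (g k))"

lemma grid_pairingD:
  assumes "grid_pairing p q P" "e \<in> P"
  shows "fst e \<in> {..<p} \<times> {..<q}" "snd e \<in> {..<p} \<times> {..<q}"
    "fst (fst e) \<noteq> fst (snd e)" "snd (fst e) \<noteq> snd (snd e)"
  using bspec[OF conjunct1[OF assms(1)[unfolded grid_pairing_def]] assms(2)]
  by (simp_all add: case_prod_beta)

lemma meets_both_corners_iff:
  assumes "fst a \<noteq> fst b" "snd a \<noteq> snd b"
  shows "(fst z = fst a \<or> snd z = snd a) \<and> (fst z = fst b \<or> snd z = snd b) \<longleftrightarrow>
         z \<in> anticorners (a, b)"
  using assms by (cases z) (auto simp: anticorners_def)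

lemma share_coord_three_in_row:
  assumes "share_coord y w1" "share_coord y w2" "share_coord y w3"
    and "fst w2 = fst w1" "fst w3 = fst w1"
    and "distinct [fst (snd w1), fst (snd w2), fst (snd w3)]"
    and "distinct [snd (snd w1), snd (snd w2), snd (snd w3)]"
  shows "fst y = fst w1"
proof (rule ccontr)
  assume "fst y \<noteq> fst w1"
  then have "fst (snd y) = fst (snd w1) \<or> snd (snd y) = snd (snd w1)"
    "fst (snd y) = fst (snd w2) \<or> snd (snd y) = snd (snd w2)"
    "fst (snd y) = fst (snd w3) \<or> snd (snd y) = snd (snd w3)"
    using assms(1-5) by (auto simp: share_coord_def)
  then show False using assms(6,7) by auto
qed

lemma share_coord_three_in_col:
  assumes "share_coord y w1" "share_coord y w2" "share_coord y w3"
    and "fst (snd w2) = fst (snd w1)" "fst (snd w3) = fst (snd w1)"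
    and "distinct [fst w1, fst w2, fst w3]"
    and "distinct [snd (snd w1), snd (snd w2), snd (snd w3)]"
  shows "fst (snd y) = fst (snd w1)"
proof (rule ccontr)
  assume "fst (snd y) \<noteq> fst (snd w1)"
  then have "fst y = fst w1 \<or> snd (snd y) = snd (snd w1)"
    "fst y = fst w2 \<or> snd (snd y) = snd (snd w2)"
    "fst y = fst w3 \<or> snd (snd y) = snd (snd w3)"
    using assms(1-5) by (auto simp: share_coord_def)
  then show False using assms(6,7) by auto
qed

locale enumerated_pairing =
  fixes p q n :: nat and P :: "(cell \<times> cell) set" and g :: "nat \<Rightarrow> cell \<times> cell"
  assumes pairing: "grid_pairing p q P"
    and covering: "thrice_covering p q P"
    and enum: "bij_betw g {..<n} P"
begin

abbreviation "W \<equiv> pairing_set p q n g"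

abbreviation "V \<equiv> KKK_verts (p + 1) (q + 1) (n + 1)"

lemma enum_in: "k < n \<Longrightarrow> g k \<in> P"
  using bij_betwE[OF enum] by blast

lemma corner_in_grid: "k < n \<Longrightarrow> a \<in> corners (g k) \<Longrightarrow> a \<in> {..<p} \<times> {..<q}"
  using grid_pairingD(1,2)[OF pairing enum_in] by (auto simp: corners_def)

lemma pair_spans_rectangle:
  "k < n \<Longrightarrow> fst (fst (g k)) \<noteq> fst (snd (g k)) \<and> snd (fst (g k)) \<noteq> snd (snd (g k))"
  using grid_pairingD(3,4)[OF pairing enum_in] by blast

lemma anticorner_in_grid: "k < n \<Longrightarrow> z \<in> anticorners (g k) \<Longrightarrow> z \<in> {..<p} \<times> {..<q}"
  using corner_in_grid[of k "fst (g k)"] corner_in_grid[of k "snd (g k)"]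
  by (auto simp: anticorners_def corners_def)

lemma enum_disjoint:
  assumes "disjoint_family_on F P" "k < n" "l < n" "z \<in> F (g k)" "z \<in> F (g l)"
  shows "k = l"
proof (rule ccontr)
  assume "k \<noteq> l"
  then have "g k \<noteq> g l" using enum assms(2,3) by (auto simp: bij_betw_def inj_on_def)
  moreover have "g k \<in> P" "g l \<in> P" using enum_in assms(2,3) by auto
  ultimately have "F (g k) \<inter> F (g l) = {}"
    using assms(1) by (auto simp: disjoint_family_on_def)
  then show False using assms(4,5) by blast
qed

lemma corners_disjoint:
  "k < n \<Longrightarrow> l < n \<Longrightarrow> a \<in> corners (g k) \<Longrightarrow> a \<in> corners (g l) \<Longrightarrow> k = l"
  using pairing enum_disjoint by (auto simp: grid_pairing_def)

lemma anticorners_disjoint: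
  "k < n \<Longrightarrow> l < n \<Longrightarrow> z \<in> anticorners (g k) \<Longrightarrow> z \<in> anticorners (g l) \<Longrightarrow> k = l"
  using pairing enum_disjoint by (auto simp: grid_pairing_def)

lemma pairing_set_subset: "W \<subseteq> V"
proof -
  have "lift a k \<in> V" if "k < n" "a \<in> corners (g k)" for a k
    using that corner_in_grid[OF that] by (auto simp: lift_def KKK_verts_def)
  moreover have "(p + 1, q + 1, n + 1) \<in> V" by (simp add: KKK_verts_def)
  ultimately show ?thesis unfolding pairing_set_def by blast
qed

lemma card_pairing_set: "card W = 2 * n + 1"
proof -
  have "card ((\<lambda>a. lift a k) ` corners (g k)) = 2" if "k < n" for k
    using pair_spans_rectangle[OF that]
    by (subst card_image) (auto simp: inj_on_def lift_def corners_def card_2_iff prod_eq_iff)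
  moreover have "disjoint_family_on (\<lambda>k. (\<lambda>a. lift a k) ` corners (g k)) {..<n}"
    by (auto simp: disjoint_family_on_def lift_def)
  ultimately have "card (\<Union>k<n. (\<lambda>a. lift a k) ` corners (g k)) = 2 * n"
    by (subst card_UN_disjoint) (auto simp: disjoint_family_on_def corners_def)
  moreover have "(p + 1, q + 1, n + 1) \<notin> (\<Union>k<n. (\<lambda>a. lift a k) ` corners (g k))"
    by (auto simp: lift_def)
  ultimately show ?thesis
    by (simp add: pairing_set_def corners_def)
qed

lemma ex_three_layers:
  assumes "3 \<le> card {e\<in>P. R e}"
  obtains k1 k2 k3 where "distinct [k1, k2, k3]" "k1 < n" "k2 < n" "k3 < n"
    "R (g k1)" "R (g k2)" "R (g k3)"
proof -
  obtain e1 e2 e3 where "e1 \<in> P" "e2 \<in> P" "e3 \<in> P" "distinct [e1, e2, e3]" "R e1" "R e2" "R e3"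
    using obtain_three_distinct[OF assms] by blast
  moreover have "e \<in> P \<Longrightarrow> \<exists>k<n. g k = e" for e
    using enum by (auto simp: bij_betw_def)
  ultimately show ?thesis using that by (metis distinct_length_2_or_more distinct_singleton)
qed

lemma lift_mem_pairing_set: "k < n \<Longrightarrow> a \<in> corners (g k) \<Longrightarrow> lift a k \<in> W"
  by (auto simp: pairing_set_def)

lemma distinct_corners:
  assumes "distinct [k1, k2, k3]" "k1 < n" "k2 < n" "k3 < n"
    "a1 \<in> corners (g k1)" "a2 \<in> corners (g k2)" "a3 \<in> corners (g k3)"
  shows "distinct [a1, a2, a3]"
proof -
  have "k1 \<noteq> k2" "k1 \<noteq> k3" "k2 \<noteq> k3" using assms(1) by auto
  then show ?thesis
    using corners_disjoint[OF assms(2,3,5)] corners_disjoint[OF assms(2,4,5)]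
      corners_disjoint[OF assms(3,4,6)] assms(6,7) by auto
qed

lemma row_witnesses:
  assumes "r < p"
  shows "\<exists>w1\<in>W. \<exists>w2\<in>W. \<exists>w3\<in>W. fst w1 = r + 1 \<and> fst w2 = r + 1 \<and> fst w3 = r + 1 \<and>
           distinct [fst (snd w1), fst (snd w2), fst (snd w3)] \<and>
           distinct [snd (snd w1), snd (snd w2), snd (snd w3)]"
proof -
  obtain k1 k2 k3 where k: "distinct [k1, k2, k3]" "k1 < n" "k2 < n" "k3 < n"
      "r \<in> rows (g k1)" "r \<in> rows (g k2)" "r \<in> rows (g k3)"
    using covering assms ex_three_layers[of "\<lambda>e. r \<in> rows e"] by (auto simp: thrice_covering_def)
  obtain a1 where a1: "a1 \<in> corners (g k1)" "fst a1 = r" using k(5) unfolding rows_def by blast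
  obtain a2 where a2: "a2 \<in> corners (g k2)" "fst a2 = r" using k(6) unfolding rows_def by blast
  obtain a3 where a3: "a3 \<in> corners (g k3)" "fst a3 = r" using k(7) unfolding rows_def by blast
  have "distinct [a1, a2, a3]" using distinct_corners[OF k(1-4) a1(1) a2(1) a3(1)] .
  then have "distinct [snd a1, snd a2, snd a3]" using a1(2) a2(2) a3(2) by (auto simp: prod_eq_iff)
  then have "fst (lift a1 k1) = r + 1 \<and> fst (lift a2 k2) = r + 1 \<and> fst (lift a3 k3) = r + 1 \<and>
      distinct [fst (snd (lift a1 k1)), fst (snd (lift a2 k2)), fst (snd (lift a3 k3))] \<and>
      distinct [snd (snd (lift a1 k1)), snd (snd (lift a2 k2)), snd (snd (lift a3 k3))]"
    using k(1) a1(2) a2(2) a3(2) by (simp add: lift_def)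
  moreover have "lift a1 k1 \<in> W" "lift a2 k2 \<in> W" "lift a3 k3 \<in> W"
    using lift_mem_pairing_set k(2-4) a1(1) a2(1) a3(1) by blast+
  ultimately show ?thesis by blast
qed

lemma col_witnesses:
  assumes "j < q"
  shows "\<exists>w1\<in>W. \<exists>w2\<in>W. \<exists>w3\<in>W. fst (snd w1) = j + 1 \<and> fst (snd w2) = j + 1 \<and> fst (snd w3) = j + 1 \<and>
           distinct [fst w1, fst w2, fst w3] \<and> distinct [snd (snd w1), snd (snd w2), snd (snd w3)]"
proof -
  obtain k1 k2 k3 where k: "distinct [k1, k2, k3]" "k1 < n" "k2 < n" "k3 < n"
      "j \<in> cols (g k1)" "j \<in> cols (g k2)" "j \<in> cols (g k3)"
    using covering assms ex_three_layers[of "\<lambda>e. j \<in> cols e"] by (auto simp: thrice_covering_def)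
  obtain a1 where a1: "a1 \<in> corners (g k1)" "snd a1 = j" using k(5) unfolding cols_def by blast
  obtain a2 where a2: "a2 \<in> corners (g k2)" "snd a2 = j" using k(6) unfolding cols_def by blast
  obtain a3 where a3: "a3 \<in> corners (g k3)" "snd a3 = j" using k(7) unfolding cols_def by blast
  have "distinct [a1, a2, a3]" using distinct_corners[OF k(1-4) a1(1) a2(1) a3(1)] .
  then have "distinct [fst a1, fst a2, fst a3]" using a1(2) a2(2) a3(2) by (auto simp: prod_eq_iff)
  then have "fst (snd (lift a1 k1)) = j + 1 \<and> fst (snd (lift a2 k2)) = j + 1 \<and> fst (snd (lift a3 k3)) = j + 1 \<and>
      distinct [fst (lift a1 k1), fst (lift a2 k2), fst (lift a3 k3)] \<and>
      distinct [snd (snd (lift a1 k1)), snd (snd (lift a2 k2)), snd (snd (lift a3 k3))]"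
    using k(1) a1(2) a2(2) a3(2) by (simp add: lift_def)
  moreover have "lift a1 k1 \<in> W" "lift a2 k2 \<in> W" "lift a3 k3 \<in> W"
    using lift_mem_pairing_set k(2-4) a1(1) a2(1) a3(1) by blast+
  ultimately show ?thesis by blast
qed

lemma signature_determines_row:
  assumes "x \<in> V" "\<forall>w\<in>W. share_coord x w \<longleftrightarrow> share_coord y w" "fst x \<le> p"
  shows "fst y = fst x"
proof -
  have "fst x - 1 < p" "fst x - 1 + 1 = fst x" using assms(1,3) by (auto simp: KKK_verts_def)
  then obtain w1 w2 w3 where w: "w1 \<in> W" "w2 \<in> W" "w3 \<in> W"
      "fst w1 = fst x" "fst w2 = fst x" "fst w3 = fst x"
      "distinct [fst (snd w1), fst (snd w2), fst (snd w3)]" "distinct [snd (snd w1), snd (snd w2), snd (snd w3)]"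
    using row_witnesses by metis
  have "share_coord y w" if "w \<in> W" "fst w = fst x" for w
  proof -
    have "share_coord x w" using that(2) by (simp add: share_coord_def)
    then show ?thesis using assms(2) that(1) by blast
  qed
  then show ?thesis
    using w share_coord_three_in_row[of y w1 w2 w3] by simp
qed

lemma signature_determines_col:
  assumes "x \<in> V" "\<forall>w\<in>W. share_coord x w \<longleftrightarrow> share_coord y w" "fst (snd x) \<le> q"
  shows "fst (snd y) = fst (snd x)"
proof -
  have "fst (snd x) - 1 < q" "fst (snd x) - 1 + 1 = fst (snd x)" using assms(1,3) by (auto simp: KKK_verts_def)
  then obtain w1 w2 w3 where w: "w1 \<in> W" "w2 \<in> W" "w3 \<in> W"
      "fst (snd w1) = fst (snd x)" "fst (snd w2) = fst (snd x)" "fst (snd w3) = fst (snd x)"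
      "distinct [fst w1, fst w2, fst w3]" "distinct [snd (snd w1), snd (snd w2), snd (snd w3)]"
    using col_witnesses by metis
  have "share_coord y w" if "w \<in> W" "fst (snd w) = fst (snd x)" for w
  proof -
    have "share_coord x w" using that(2) by (simp add: share_coord_def)
    then show ?thesis using assms(2) that(1) by blast
  qed
  then show ?thesis
    using w share_coord_three_in_col[of y w1 w2 w3] by simp
qed

lemma signature_anticorner:
  assumes "x \<in> V" "\<forall>w\<in>W. share_coord x w \<longleftrightarrow> share_coord y w" "cell_of y = cell_of x"
    and "k < n" "snd (snd x) = k + 1" "snd (snd y) \<noteq> k + 1"
  shows "(fst x - 1, fst (snd x) - 1) \<in> anticorners (g k)"
proof -
  have "share_coord y (lift a k)" if "a \<in> corners (g k)" for a
  proof -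
    have "lift a k \<in> W" using that assms(4) by (auto simp: pairing_set_def)
    moreover have "share_coord x (lift a k)" using assms(5) by (simp add: share_coord_def lift_def)
    ultimately show ?thesis using assms(2) by blast
  qed
  moreover have "fst y = fst x" "fst (snd y) = fst (snd x)"
    using assms(3) by (simp_all add: cell_of_def prod_eq_iff)
  ultimately have "fst x - 1 = fst a \<or> fst (snd x) - 1 = snd a" if "a \<in> corners (g k)" for a
    using that assms(6) by (fastforce simp: share_coord_def lift_def)
  then show ?thesis
    using meets_both_corners_iff[of "fst (g k)" "snd (g k)" "(fst x - 1, fst (snd x) - 1)"]
      pair_spans_rectangle[OF assms(4)] by (simp add: corners_def)
qed

lemma signature_determines_layer:
  assumes "x \<in> V" "y \<in> V" "\<forall>w\<in>W. share_coord x w \<longleftrightarrow> share_coord y w" "cell_of y = cell_of x"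
    and "snd (snd x) \<le> n"
  shows "snd (snd y) = snd (snd x)"
proof (rule ccontr)
  assume ne: "snd (snd y) \<noteq> snd (snd x)"
  obtain k where k: "k < n" "snd (snd x) = k + 1"
    using assms(1,5) by (auto simp: KKK_verts_def) (metis Suc_le_D Suc_le_lessD Suc_eq_plus1)
  have z: "(fst x - 1, fst (snd x) - 1) \<in> anticorners (g k)"
    using signature_anticorner[OF assms(1,3,4) k] ne k(2) by simp
  show False
  proof (cases "snd (snd y) = n + 1")
    case True
    then have "share_coord x (p + 1, q + 1, n + 1)"
      using assms(3) by (simp add: share_coord_def pairing_set_def)
    then show False
      using anticorner_in_grid[OF k(1) z] assms(1) k by (auto simp: share_coord_def KKK_verts_def)
  next
    case False
    then obtain l where l: "l < n" "snd (snd y) = l + 1"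
      using assms(2) by (auto simp: KKK_verts_def) (metis Suc_le_D Suc_le_lessD Suc_eq_plus1)
    have "\<forall>w\<in>W. share_coord y w \<longleftrightarrow> share_coord x w" using assms(3) by simp
    then have "(fst y - 1, fst (snd y) - 1) \<in> anticorners (g l)"
      using signature_anticorner[OF assms(2) _ assms(4)[symmetric] l] k(2) l(2) ne by simp
    moreover have "fst y = fst x" "fst (snd y) = fst (snd x)"
      using assms(4) by (simp_all add: cell_of_def prod_eq_iff)
    ultimately have "k = l" using anticorners_disjoint[OF k(1) l(1) z] by simp
    then show False using k(2) l(2) ne by simp
  qed
qed

lemma signature_inj:
  assumes "x \<in> V" "y \<in> V" "\<forall>w\<in>W. share_coord x w \<longleftrightarrow> share_coord y w"
  shows "x = y"
proof -
  have sym: "\<forall>w\<in>W. share_coord y w \<longleftrightarrow> share_coord x w" using assms(3) by simp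
  have "fst y = fst x"
    using signature_determines_row[OF assms(1,3)] signature_determines_row[OF assms(2) sym] assms(1,2)
    by (force simp: KKK_verts_def)
  moreover have "fst (snd y) = fst (snd x)"
    using signature_determines_col[OF assms(1,3)] signature_determines_col[OF assms(2) sym] assms(1,2)
    by (force simp: KKK_verts_def)
  ultimately have "cell_of y = cell_of x" by (simp add: cell_of_def)
  then have "snd (snd y) = snd (snd x)"
    using signature_determines_layer[OF assms] signature_determines_layer[OF assms(2,1) sym] assms(1,2)
    by (force simp: KKK_verts_def)
  with \<open>fst y = fst x\<close> \<open>fst (snd y) = fst (snd x)\<close> show ?thesis by (simp add: prod_eq_iff)
qed

lemma resolving_pairing_set:
  assumes "3 \<le> p" "3 \<le> q" "3 \<le> n"
  shows "resolving V KKK_adj W"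
  using signature_inj pairing_set_subset assms by (simp add: resolving_KKK_iff)

lemma total_dominating_pairing_set:
  assumes "2 \<le> p"
  shows "total_dominating V KKK_adj W"
  unfolding total_dominating_def
proof (intro conjI ballI)
  fix v assume "v \<in> V"
  define r where "r = (if fst v = 1 then 1 else 0 :: nat)"
  have r: "r < p" "r + 1 \<noteq> fst v" using assms by (auto simp: r_def)
  obtain w1 w2 w3 where w: "w1 \<in> W" "w2 \<in> W" "w3 \<in> W"
      "fst w1 = r + 1" "fst w2 = r + 1" "fst w3 = r + 1"
      "distinct [fst (snd w1), fst (snd w2), fst (snd w3)]" "distinct [snd (snd w1), snd (snd w2), snd (snd w3)]"
    using row_witnesses[OF r(1)] by blast
  then have "(fst (snd w1) \<noteq> fst (snd v) \<and> snd (snd w1) \<noteq> snd (snd v)) \<or>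
      (fst (snd w2) \<noteq> fst (snd v) \<and> snd (snd w2) \<noteq> snd (snd v)) \<or>
      (fst (snd w3) \<noteq> fst (snd v) \<and> snd (snd w3) \<noteq> snd (snd v))"
    by auto
  then have "KKK_adj v w1 \<or> KKK_adj v w2 \<or> KKK_adj v w3"
    using w(4-6) r(2) unfolding KKK_adj_def by auto
  then show "\<exists>w\<in>W. KKK_adj v w" using w(1-3) by blast
qed (rule pairing_set_subset)

end

section \<open>Constructing grid pairings\<close>

lemma grid_pairing_subset: "grid_pairing p q P \<Longrightarrow> P' \<subseteq> P \<Longrightarrow> grid_pairing p q P'"
  unfolding grid_pairing_def by (auto intro: disjoint_family_on_mono)

lemma thrice_covering_superset:
  assumes "thrice_covering p q P" "P \<subseteq> P'" "finite P'"
  shows "thrice_covering p q P'"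
proof -
  have "card {e\<in>P. R e} \<le> card {e\<in>P'. R e}" for R
    using assms(2,3) by (intro card_mono) auto
  then show ?thesis using assms(1) unfolding thrice_covering_def by (meson order_trans)
qed

definition transpose_pair :: "cell \<times> cell \<Rightarrow> cell \<times> cell" where
  "transpose_pair e = (prod.swap (fst e), prod.swap (snd e))"

lemma inj_transpose_pair: "inj transpose_pair"
  by (auto simp: inj_def transpose_pair_def prod_eq_iff)

lemma grid_pairing_transpose:
  assumes "grid_pairing p q P"
  shows "grid_pairing q p (transpose_pair ` P)"
proof -
  have disj: "disjoint_family_on corners P" "disjoint_family_on anticorners P"
    using assms by (simp_all add: grid_pairing_def)
  have "disjoint_family_on corners (transpose_pair ` P)"
    by (rule disjoint_family_on_image_transport[OF disj(1) inj_swap])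
      (auto simp: corners_def transpose_pair_def)
  moreover have "disjoint_family_on anticorners (transpose_pair ` P)"
    by (rule disjoint_family_on_image_transport[OF disj(2) inj_swap])
      (auto simp: anticorners_def transpose_pair_def)
  moreover have "fst e \<in> {..<q} \<times> {..<p} \<and> snd e \<in> {..<q} \<times> {..<p} \<and>
      fst (fst e) \<noteq> fst (snd e) \<and> snd (fst e) \<noteq> snd (snd e)" if "e \<in> transpose_pair ` P" for e
    using that grid_pairingD[OF assms] by (auto simp: transpose_pair_def)
  ultimately show ?thesis
    unfolding grid_pairing_def by (simp add: split_beta)
qed

lemma thrice_covering_transpose:
  assumes "thrice_covering p q P"
  shows "thrice_covering q p (transpose_pair ` P)"
proof -
  have "rows (transpose_pair e) = cols e" "cols (transpose_pair e) = rows e" for e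
    by (auto simp: rows_def cols_def corners_def transpose_pair_def)
  then show ?thesis
    using assms inj_on_subset[OF inj_transpose_pair]
    by (simp add: thrice_covering_def card_filter_image)
qed

fun diag_pair :: "nat \<Rightarrow> nat \<times> nat \<times> nat \<Rightarrow> cell \<times> cell" where
  "diag_pair q (r, r', x) = ((r, x), (r', Suc x mod q))"

lemma inj_diag_pair: "inj (diag_pair q)"
  by (intro injI) (auto elim!: diag_pair.elims)

lemma diag_pairs_disjoint:
  assumes "2 \<le> q"
    and bounds: "\<And>r r' x. (r, r', x) \<in> T \<Longrightarrow> x < q"
    and inj1: "\<And>r r' s' x. (r, r', x) \<in> T \<Longrightarrow> (r, s', x) \<in> T \<Longrightarrow> r' = s'"
    and inj2: "\<And>r r' s x. (r, r', x) \<in> T \<Longrightarrow> (s, r', x) \<in> T \<Longrightarrow> r = s"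
    and cross: "\<And>r r' s x y. (r, r', x) \<in> T \<Longrightarrow> (s, r, y) \<in> T \<Longrightarrow> x \<noteq> Suc y mod q \<and> Suc x mod q \<noteq> y"
    and t: "(r, r', x) \<in> T" "(s, s', y) \<in> T" "(r, r', x) \<noteq> (s, s', y)"
  shows "corners (diag_pair q (r, r', x)) \<inter> corners (diag_pair q (s, s', y)) = {}"
    "anticorners (diag_pair q (r, r', x)) \<inter> anticorners (diag_pair q (s, s', y)) = {}"
proof -
  have shift_inj: "Suc x mod q = Suc y mod q \<Longrightarrow> x = y"
    using Suc_mod_inj bounds t(1,2) by blast
  have "(r, x) \<noteq> (s, y)" "(r', x) \<noteq> (s', y)"
    using inj1[of r r' x s'] inj2[of r r' x s] t by auto
  moreover have "(r', Suc x mod q) \<noteq> (s', Suc y mod q)" "(r, Suc x mod q) \<noteq> (s, Suc y mod q)"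
    using \<open>(r, x) \<noteq> (s, y)\<close> \<open>(r', x) \<noteq> (s', y)\<close> shift_inj by auto
  moreover have "(r, x) \<noteq> (s', Suc y mod q)" "(r, Suc x mod q) \<noteq> (s', y)"
    using cross[of r r' x s y] t(1,2) by auto
  moreover have "(r', Suc x mod q) \<noteq> (s, y)" "(r', x) \<noteq> (s, Suc y mod q)"
    using cross[of s s' y r x] t(1,2) by auto
  ultimately show "corners (diag_pair q (r, r', x)) \<inter> corners (diag_pair q (s, s', y)) = {}"
    "anticorners (diag_pair q (r, r', x)) \<inter> anticorners (diag_pair q (s, s', y)) = {}"
    by (auto simp: corners_def anticorners_def)
qed

lemma grid_pairing_diag_pairs:
  assumes "2 \<le> q"
    and bounds: "\<And>r r' x. (r, r', x) \<in> T \<Longrightarrow> r < p \<and> r' < p \<and> r \<noteq> r' \<and> x < q"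
    and inj1: "\<And>r r' s' x. (r, r', x) \<in> T \<Longrightarrow> (r, s', x) \<in> T \<Longrightarrow> r' = s'"
    and inj2: "\<And>r r' s x. (r, r', x) \<in> T \<Longrightarrow> (s, r', x) \<in> T \<Longrightarrow> r = s"
    and cross: "\<And>r r' s x y. (r, r', x) \<in> T \<Longrightarrow> (s, r, y) \<in> T \<Longrightarrow> x \<noteq> Suc y mod q \<and> Suc x mod q \<noteq> y"
  shows "grid_pairing p q (diag_pair q ` T)"
proof -
  have disj: "corners e \<inter> corners e' = {} \<and> anticorners e \<inter> anticorners e' = {}"
    if e: "e \<in> diag_pair q ` T" "e' \<in> diag_pair q ` T" "e \<noteq> e'" for e e'
  proof -
    obtain r r' x s s' y where t: "(r, r', x) \<in> T" "(s, s', y) \<in> T"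
        and e_eq: "e = diag_pair q (r, r', x)" "e' = diag_pair q (s, s', y)"
      using e(1,2) by (metis imageE prod_cases3)
    have "(r, r', x) \<noteq> (s, s', y)" using e(3) e_eq by auto
    moreover have "\<And>r r' x. (r, r', x) \<in> T \<Longrightarrow> x < q" using bounds by blast
    ultimately show ?thesis
      using diag_pairs_disjoint[OF assms(1) _ inj1 inj2 cross t] e_eq by simp
  qed
  have rect: "fst e \<in> {..<p} \<times> {..<q} \<and> snd e \<in> {..<p} \<times> {..<q} \<and>
      fst (fst e) \<noteq> fst (snd e) \<and> snd (fst e) \<noteq> snd (snd e)" if e: "e \<in> diag_pair q ` T" for e
  proof -
    obtain r r' x where t: "(r, r', x) \<in> T" and e_eq: "e = diag_pair q (r, r', x)"
      using e by (metis imageE prod_cases3)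
    have "r < p" "r' < p" "r \<noteq> r'" "x < q" using bounds[OF t] by auto
    moreover have "Suc x mod q \<noteq> x" "Suc x mod q < q"
      using \<open>x < q\<close> assms(1) by (auto simp: mod_Suc)
    ultimately show ?thesis by (simp add: e_eq)
  qed
  show ?thesis
    unfolding grid_pairing_def disjoint_family_on_def
  proof (intro conjI ballI impI)
    show "case e of (a, b) \<Rightarrow> a \<in> {..<p} \<times> {..<q} \<and> b \<in> {..<p} \<times> {..<q} \<and> fst a \<noteq> fst b \<and> snd a \<noteq> snd b"
      if "e \<in> diag_pair q ` T" for e
      using rect[OF that] by (simp add: split_beta)
  qed (use disj in blast)+
qed

text \<open>Slots \<open>3u\<close> and \<open>3u + 1\<close> go to column \<open>2u\<close> and slot \<open>3u + 2\<close> to column \<open>2u + 1\<close>. As the pair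
  of a slot in column \<open>x\<close> also occupies column \<open>x + 1\<close>, every column meets three slots, and
  \<open>num_slots q = \<lceil>3q/2\<rceil>\<close> slots suffice to reach all \<open>q\<close> columns.\<close>

definition slot_col :: "nat \<Rightarrow> nat" where
  "slot_col s = 2 * (s div 3) + (if s mod 3 = 2 then 1 else 0)"

definition num_slots :: "nat \<Rightarrow> nat" where
  "num_slots q = (3 * q + 1) div 2"

lemma slot_cases:
  fixes s :: nat
  obtains (first) u where "s = 3 * u" | (second) u where "s = Suc (3 * u)"
    | (third) u where "s = Suc (Suc (3 * u))"
proof -
  have "s = 3 * (s div 3) + s mod 3" by simp
  moreover have "s mod 3 < 3" by simp
  then have "s mod 3 = 0 \<or> s mod 3 = 1 \<or> s mod 3 = 2" by linarith
  ultimately show ?thesis using that by (metis add.right_neutral add_Suc_right one_add_one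
    plus_1_eq_Suc)
qed

lemma slot_col_simps:
  "slot_col (3 * u) = 2 * u" "slot_col (Suc (3 * u)) = 2 * u" "slot_col (Suc (Suc (3 * u))) = Suc (2 * u)"
proof -
  have "(3 * u + t) div 3 = u" "(3 * u + t) mod 3 = t" if "t < 3" for t
    using that by simp_all
  from this[of 0] this[of 1] this[of 2] show
    "slot_col (3 * u) = 2 * u" "slot_col (Suc (3 * u)) = 2 * u" "slot_col (Suc (Suc (3 * u))) = Suc (2 * u)"
    by (simp_all add: slot_col_def)
qed

lemma slot_mod_simps: "3 * u mod 3 = 0" "Suc (3 * u) mod 3 = 1" "Suc (Suc (3 * u)) mod 3 = 2"
proof -
  have "(3 * u + t) mod 3 = t" if "t < 3" for t
    using that by simp
  from this[of 0] this[of 1] this[of 2] show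
    "3 * u mod 3 = 0" "Suc (3 * u) mod 3 = 1" "Suc (Suc (3 * u)) mod 3 = 2"
    by simp_all
qed

lemma less_num_slots_iff: "s < num_slots q \<longleftrightarrow> 2 * s + 1 \<le> 3 * q"
  unfolding num_slots_def by linarith

lemma slot_col_less:
  assumes "s < num_slots q"
  shows "slot_col s < q"
  using assms unfolding less_num_slots_iff by (cases s rule: slot_cases) (simp_all add: slot_col_simps)

lemma even_slot_col_iff: "even (slot_col s) \<longleftrightarrow> s mod 3 \<noteq> 2"
  by (cases s rule: slot_cases) (simp_all add: slot_col_simps slot_mod_simps)

lemma slot_col_add_two_le:
  assumes "s mod 3 \<noteq> 2" "s + 2 - s mod 3 < num_slots q"
  shows "slot_col s + 2 \<le> q"
  using assms unfolding less_num_slots_iff by (cases s rule: slot_cases) (simp_all add: slot_col_simps slot_mod_simps)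

lemma slot_col_eq_cases:
  assumes "slot_col s = slot_col s'"
  shows "s = s' \<or> (s' = s + 1 \<and> s mod 3 = 0) \<or> (s = s' + 1 \<and> s' mod 3 = 0)"
  using assms Suc_double_not_eq_double double_not_eq_Suc_double
  by (cases s rule: slot_cases; cases s' rule: slot_cases) (simp_all add: slot_col_simps slot_mod_simps)

lemma slot_col_last:
  assumes "3 \<le> q"
  shows "slot_col (num_slots q - 1) = q - 1"
proof (cases "even q")
  case True
  then obtain v where v: "q = 2 * v" by blast
  then have "num_slots q - 1 = Suc (Suc (3 * (v - 1)))" using assms by (simp add: num_slots_def)
  then show ?thesis using v assms by (simp add: slot_col_simps)
next
  case False
  then obtain v where v: "q = 2 * v + 1" using oddE by blast
  then have "num_slots q - 1 = Suc (3 * v)" by (simp add: num_slots_def)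
  then show ?thesis using v by (simp add: slot_col_simps)
qed

lemma card_slots_meeting_col:
  assumes "j < q" "3 \<le> q"
  shows "3 \<le> card {s \<in> {..<num_slots q}. j \<in> {slot_col s, Suc (slot_col s) mod q}}"
proof (cases "even j")
  case True
  then obtain u where u: "j = 2 * u" by blast
  have first_two: "3 * u + 1 < num_slots q" "slot_col (3 * u) = j" "slot_col (3 * u + 1) = j"
    using u assms(1) by (simp_all add: less_num_slots_iff slot_col_simps)
  obtain s3 where "s3 < num_slots q" "s3 \<noteq> 3 * u" "s3 \<noteq> 3 * u + 1" "Suc (slot_col s3) mod q = j"
  proof (cases "u = 0")
    case True
    then show ?thesis
      using that[of "num_slots q - 1"] slot_col_last[OF assms(2)] u assms(2) by (simp add: num_slots_def)
  next
    case False
    then have "3 * u - 1 = 3 * (u - 1) + 2" by simp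
    then show ?thesis
      using that[of "3 * u - 1"] False u first_two(1) assms(1) by (simp add: slot_col_simps)
  qed
  then show ?thesis
    using first_two by (intro three_le_card[of _ "3 * u" "3 * u + 1" s3]) auto
next
  case False
  then obtain u where u: "j = 2 * u + 1" using oddE by blast
  have "3 * u + 2 < num_slots q" using u assms by (simp add: less_num_slots_iff)
  then show ?thesis
    using u assms(1) by (intro three_le_card[of _ "3 * u + 2" "3 * u" "3 * u + 1"]) (simp_all add: slot_col_simps)
qed

definition slot_triple :: "(nat \<Rightarrow> nat \<times> nat) \<Rightarrow> nat \<Rightarrow> nat \<times> nat \<times> nat" where
  "slot_triple \<rho> s = (fst (\<rho> s), snd (\<rho> s), slot_col s)"

lemma rows_slot_triple: "rows (diag_pair q (slot_triple \<rho> s)) = {fst (\<rho> s), snd (\<rho> s)}"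
  by (simp add: slot_triple_def rows_def corners_def)

lemma cols_slot_triple: "cols (diag_pair q (slot_triple \<rho> s)) = {slot_col s, Suc (slot_col s) mod q}"
  by (simp add: slot_triple_def cols_def corners_def)

lemma inj_on_slot_triple:
  assumes "\<And>s. s mod 3 = 0 \<Longrightarrow> s + 1 < m \<Longrightarrow> \<rho> (s + 1) \<noteq> \<rho> s"
  shows "inj_on (slot_triple \<rho>) {..<m}"
proof (rule inj_onI)
  fix s s' assume "s \<in> {..<m}" "s' \<in> {..<m}" "slot_triple \<rho> s = slot_triple \<rho> s'"
  then show "s = s'"
    using slot_col_eq_cases[of s s'] assms[of s] assms[of s']
    by (auto simp: slot_triple_def prod_eq_iff)
qed

lemma thrice_covering_slots:
  assumes "3 \<le> q" and inj: "inj_on (slot_triple \<rho>) {..<num_slots q}"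
    and row: "\<And>r. r < p \<Longrightarrow> 3 \<le> card {s \<in> {..<num_slots q}. r \<in> {fst (\<rho> s), snd (\<rho> s)}}"
  shows "thrice_covering p q (diag_pair q ` slot_triple \<rho> ` {..<num_slots q})"
proof -
  have "inj_on (diag_pair q \<circ> slot_triple \<rho>) {..<num_slots q}"
    by (rule comp_inj_on[OF inj inj_on_subset[OF inj_diag_pair subset_UNIV]])
  then have "inj_on (\<lambda>s. diag_pair q (slot_triple \<rho> s)) {..<num_slots q}" by (simp add: o_def)
  then show ?thesis
    using row card_slots_meeting_col[OF _ assms(1)]
    by (simp add: thrice_covering_def image_image card_filter_image rows_slot_triple cols_slot_triple)
qed

text \<open>A row assignment \<open>\<rho>\<close> of the slots that covers every row thrice, separates the two slots
  sharing a column and stays within a pairing \<open>T\<close> of at least \<open>n\<close> triples yields a thrice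
  covering pairing of exactly \<open>n\<close> pairs: fill up with arbitrary further triples of \<open>T\<close>.\<close>

lemma ex_pairing_of_slot_rows:
  assumes "3 \<le> q" and T: "grid_pairing p q (diag_pair q ` T)" "finite T"
    and mem: "\<And>s. s < num_slots q \<Longrightarrow> slot_triple \<rho> s \<in> T"
    and consec: "\<And>s. s mod 3 = 0 \<Longrightarrow> s + 1 < num_slots q \<Longrightarrow> \<rho> (s + 1) \<noteq> \<rho> s"
    and row: "\<And>r. r < p \<Longrightarrow> 3 \<le> card {s \<in> {..<num_slots q}. r \<in> {fst (\<rho> s), snd (\<rho> s)}}"
    and n: "num_slots q \<le> n" "n \<le> card T"
  shows "\<exists>P. grid_pairing p q P \<and> thrice_covering p q P \<and> finite P \<and> card P = n"
proof -
  have inj: "inj_on (slot_triple \<rho>) {..<num_slots q}"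
    using consec by (rule inj_on_slot_triple)
  have core: "slot_triple \<rho> ` {..<num_slots q} \<subseteq> T" using mem by blast
  have "card (slot_triple \<rho> ` {..<num_slots q}) \<le> n" using inj n(1) by (simp add: card_image)
  then obtain S where S: "slot_triple \<rho> ` {..<num_slots q} \<subseteq> S" "S \<subseteq> T" "card S = n"
    by (rule obtain_subset_between[OF T(2) core _ n(2)])
  have "finite S" using S(2) T(2) by (rule finite_subset)
  have "grid_pairing p q (diag_pair q ` S)"
    using T(1) image_mono[OF S(2)] by (rule grid_pairing_subset)
  moreover have "thrice_covering p q (diag_pair q ` S)"
    using thrice_covering_slots[OF assms(1) inj row] image_mono[OF S(1)] finite_imageI[OF \<open>finite S\<close>]
    by (rule thrice_covering_superset)
  moreover have "card (diag_pair q ` S) = n"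
    using S(3) by (simp add: card_image inj_on_subset[OF inj_diag_pair])
  ultimately show ?thesis using \<open>finite S\<close> by blast
qed

definition band_triples :: "nat set \<Rightarrow> nat \<Rightarrow> (nat \<times> nat \<times> nat) set" where
  "band_triples I q = (\<lambda>(i, x). (2 * i, 2 * i + 1, x)) ` (I \<times> {..<q})"

lemma mem_band_triples:
  "(r, r', x) \<in> band_triples I q \<longleftrightarrow> even r \<and> r div 2 \<in> I \<and> r' = r + 1 \<and> x < q"
  by (auto simp: band_triples_def image_iff elim!: evenE)

lemma card_band_triples: "finite I \<Longrightarrow> card (band_triples I q) = card I * q"
  unfolding band_triples_def by (subst card_image) (auto simp: inj_on_def card_cartesian_product)

lemma finite_band_triples: "finite I \<Longrightarrow> finite (band_triples I q)"
  by (simp add: band_triples_def)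

lemma grid_pairing_band_triples:
  assumes "2 \<le> q" "\<forall>i\<in>I. 2 * i + 1 < p"
  shows "grid_pairing p q (diag_pair q ` band_triples I q)"
  by (rule grid_pairing_diag_pairs) (use assms in \<open>auto simp: mem_band_triples\<close>)

text \<open>For even \<open>p = 2h\<close> the rows form \<open>h\<close> bands of two, and slot \<open>s\<close> goes to band \<open>s mod h\<close>.\<close>

lemma ex_pairing_even:
  assumes "even p" "4 \<le> p" "p \<le> q" "3 * q \<le> 2 * n" "2 * n \<le> p * q"
  shows "\<exists>P. grid_pairing p q P \<and> thrice_covering p q P \<and> finite P \<and> card P = n"
proof -
  define h where "h = p div 2"
  have p: "p = 2 * h" "2 \<le> h" using assms(1,2) by (auto simp: h_def)
  define \<rho> where "\<rho> s = (2 * (s mod h), 2 * (s mod h) + 1)" for s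
  have "slot_triple \<rho> s \<in> band_triples {..<h} q" if "s < num_slots q" for s
    using p(2) slot_col_less[OF that] by (simp add: slot_triple_def \<rho>_def mem_band_triples)
  moreover have "\<rho> (s + 1) \<noteq> \<rho> s" for s
    using p(2) by (simp add: \<rho>_def mod_Suc)
  moreover have "3 \<le> card {s \<in> {..<num_slots q}. r \<in> {fst (\<rho> s), snd (\<rho> s)}}" if "r < p" for r
  proof -
    let ?i = "r div 2"
    have "?i < h" using that p by simp
    moreover have "3 * h \<le> num_slots q" using assms(3) p by (simp add: num_slots_def)
    moreover have "r \<in> {fst (\<rho> ?i), snd (\<rho> ?i)}" "r \<in> {fst (\<rho> (?i + h)), snd (\<rho> (?i + h))}"
      "r \<in> {fst (\<rho> (?i + 2 * h)), snd (\<rho> (?i + 2 * h))}"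
      using \<open>?i < h\<close> by (auto simp: \<rho>_def)
    ultimately show ?thesis
      using p(2) by (intro three_le_card[of _ ?i "?i + h" "?i + 2 * h"]) auto
  qed
  moreover have "num_slots q \<le> n" "n \<le> card (band_triples {..<h} q)"
    using assms(4,5) p by (simp_all add: num_slots_def card_band_triples)
  moreover have "grid_pairing p q (diag_pair q ` band_triples {..<h} q)"
    using assms(2,3) p by (intro grid_pairing_band_triples) auto
  ultimately show ?thesis
    using assms(2,3) finite_band_triples[of "{..<h}" q]
    by (intro ex_pairing_of_slot_rows[of q p "band_triples {..<h} q" \<rho>]) auto
qed

text \<open>For odd \<open>p\<close> the rows \<open>2, \<dots>, p - 2\<close> form bands of two, while the rows \<open>0\<close>, \<open>1\<close> and \<open>p - 1\<close>
  share a gadget: the columns \<open>x\<close> with \<open>x\<close> even and \<open>x + 1 < q\<close> carry the two triples joining row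
  \<open>0\<close> to \<open>p - 1\<close> and \<open>p - 1\<close> to \<open>1\<close>, all other columns the triple joining \<open>0\<close> to \<open>1\<close>. This uses all
  but at most one cell of the grid.\<close>

definition gadget_triples :: "nat \<Rightarrow> nat \<Rightarrow> (nat \<times> nat \<times> nat) set" where
  "gadget_triples p q = {(r, r', x). x < q \<and>
     (if even x \<and> x + 2 \<le> q then (r, r') = (0, p - 1) \<or> (r, r') = (p - 1, 1) else (r, r') = (0, 1))}"

definition odd_triples :: "nat \<Rightarrow> nat \<Rightarrow> (nat \<times> nat \<times> nat) set" where
  "odd_triples p q = band_triples {1..(p - 3) div 2} q \<union> gadget_triples p q"

lemma mem_odd_triples:
  "(r, r', x) \<in> odd_triples p q \<longleftrightarrow> x < q \<and>
     (even r \<and> 2 \<le> r \<and> r + 3 \<le> p \<and> r' = r + 1 \<or>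
      (if even x \<and> x + 2 \<le> q then (r, r') = (0, p - 1) \<or> (r, r') = (p - 1, 1) else (r, r') = (0, 1)))"
proof -
  have "r div 2 \<in> {1..(p - 3) div 2} \<longleftrightarrow> 2 \<le> r \<and> r + 3 \<le> p" if "even r"
  proof -
    obtain k where "r = 2 * k" using \<open>even r\<close> by blast
    then show ?thesis by (auto simp: less_eq_div_iff_mult_less_eq)
  qed
  then have "even r \<and> r div 2 \<in> {1..(p - 3) div 2} \<longleftrightarrow> even r \<and> 2 \<le> r \<and> r + 3 \<le> p"
    by blast
  then show ?thesis
    unfolding odd_triples_def gadget_triples_def Un_iff mem_band_triples mem_Collect_eq case_prod_conv
    by blast
qed

lemma finite_gadget_triples: "finite (gadget_triples p q)"
proof -
  have "gadget_triples p q \<subseteq> {0, p - 1} \<times> {p - 1, 1} \<times> {..<q}"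
    by (auto simp: gadget_triples_def split: if_splits)
  then show ?thesis by (rule finite_subset) simp
qed

lemma finite_odd_triples: "finite (odd_triples p q)"
  by (simp add: odd_triples_def finite_band_triples finite_gadget_triples)

lemma odd_bands_eq:
  fixes p :: nat
  assumes "odd p" "3 \<le> p"
  shows "2 * ((p - 3) div 2) + 3 = p"
proof -
  obtain b where "p = 2 * b + 1" using assms(1) by (elim oddE)
  then have "p - 3 = 2 * (b - 1)" using assms(2) by simp
  then show ?thesis using assms(2) by simp
qed

lemma card_gadget_triples:
  assumes "3 \<le> p"
  shows "card (gadget_triples p q) = q + q div 2"
proof -
  define E where "E = (\<lambda>u. 2 * u) ` {..<q div 2}"
  have E: "x \<in> E \<longleftrightarrow> even x \<and> x + 2 \<le> q" for x
    by (auto simp: E_def elim!: evenE)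
  define A B C where "A = (\<lambda>x. (0 :: nat, p - 1, x)) ` E" and "B = (\<lambda>x. (p - 1, 1 :: nat, x)) ` E"
    and "C = (\<lambda>x. (0 :: nat, 1 :: nat, x)) ` ({..<q} - E)"
  have "gadget_triples p q = A \<union> B \<union> C"
    using assms by (auto simp: gadget_triples_def A_def B_def C_def E image_iff split: if_splits)
  moreover have "card E = q div 2" by (simp add: E_def card_image inj_on_def)
  moreover have "E \<subseteq> {..<q}" using E by auto
  then have "card ({..<q} - E) = q - q div 2"
    using \<open>card E = q div 2\<close> by (simp add: card_Diff_subset finite_subset)
  moreover have "card A = card E" "card B = card E" "card C = card ({..<q} - E)"
    by (simp_all add: A_def B_def C_def card_image inj_on_def)
  moreover have "A \<inter> B = {}" "(A \<union> B) \<inter> C = {}" "finite A" "finite B" "finite C"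
    using assms by (auto simp: A_def B_def C_def E_def)
  ultimately show ?thesis by (simp add: card_Un_disjoint)
qed

lemma card_odd_triples:
  assumes "odd p" "3 \<le> p"
  shows "p * q \<le> 2 * card (odd_triples p q) + 1"
proof -
  obtain m where m: "p = m + 3" "even m" using assms by (metis le_add_diff_inverse2 odd_add odd_numeral)
  have "band_triples {1..(p - 3) div 2} q \<inter> gadget_triples p q = {}"
    using assms by (auto simp: mem_band_triples gadget_triples_def split: if_splits)
  then have "card (odd_triples p q) = (p - 3) div 2 * q + (q + q div 2)"
    using assms(2) by (simp add: odd_triples_def card_Un_disjoint finite_band_triples
        finite_gadget_triples card_band_triples card_gadget_triples)
  moreover have "2 * ((p - 3) div 2 * q) = m * q" using m by simp
  moreover have "p * q = m * q + 3 * q" using m by (simp add: algebra_simps)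
  moreover have "q \<le> 2 * (q div 2) + 1" using div_mult_mod_eq[of q 2] mod_less_divisor[of 2 q] by linarith
  ultimately show ?thesis by linarith
qed

lemma grid_pairing_odd_triples:
  assumes "odd p" "3 \<le> p" "2 \<le> q"
  shows "grid_pairing p q (diag_pair q ` odd_triples p q)"
proof (rule grid_pairing_diag_pairs)
  fix r r' x assume "(r, r', x) \<in> odd_triples p q"
  then show "r < p \<and> r' < p \<and> r \<noteq> r' \<and> x < q"
    using assms by (auto simp: mem_odd_triples split: if_splits)
next
  fix r r' s' x assume "(r, r', x) \<in> odd_triples p q" "(r, s', x) \<in> odd_triples p q"
  then show "r' = s'"
    using assms by (auto simp: mem_odd_triples split: if_splits)
next
  fix r r' s x assume "(r, r', x) \<in> odd_triples p q" "(s, r', x) \<in> odd_triples p q"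
  then show "r = s"
    using assms by (auto simp: mem_odd_triples split: if_splits)
next
  fix r r' s x y assume "(r, r', x) \<in> odd_triples p q" "(s, r, y) \<in> odd_triples p q"
  then show "x \<noteq> Suc y mod q \<and> Suc x mod q \<noteq> y"
    using assms by (auto simp: mem_odd_triples split: if_splits)
qed (rule assms(3))

text \<open>For \<open>p = 3\<close> the hypotheses force \<open>2n = 3q\<close> with \<open>q\<close> even, and the slots run through the gadget
  column by column.\<close>

definition slot_rows_3 :: "nat \<Rightarrow> nat \<times> nat" where
  "slot_rows_3 s = (if s mod 3 = 0 then (0, 2) else if s mod 3 = 1 then (2, 1) else (0, 1))"

lemma slot_triple_rows_3_mem:
  assumes "even q" "s < num_slots q"
  shows "slot_triple slot_rows_3 s \<in> odd_triples 3 q"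
proof (cases "s mod 3 = 2")
  case True
  then show ?thesis
    using slot_col_less[OF assms(2)] even_slot_col_iff[of s]
    by (simp add: slot_triple_def slot_rows_3_def mem_odd_triples)
next
  case False
  obtain v where v: "q = 2 * v" using assms(1) by blast
  have "s + 2 - s mod 3 < num_slots q"
  proof (cases s rule: slot_cases)
    case (first u)
    then have "u < v" using assms(2) v by (simp add: less_num_slots_iff)
    then show ?thesis using first v by (simp add: less_num_slots_iff slot_mod_simps)
  next
    case (second u)
    then have "u < v" using assms(2) v by (simp add: less_num_slots_iff)
    then show ?thesis using second v by (simp add: less_num_slots_iff slot_mod_simps)
  next
    case third
    then show ?thesis using False by (simp add: slot_mod_simps)
  qed
  then have "slot_col s + 2 \<le> q" using False by (intro slot_col_add_two_le)
  then show ?thesis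
    using False even_slot_col_iff[of s] by (auto simp: slot_triple_def slot_rows_3_def mem_odd_triples)
qed

lemma card_slots_rows_3:
  assumes "r < 3" "5 \<le> m"
  shows "3 \<le> card {s \<in> {..<m}. r \<in> {fst (slot_rows_3 s), snd (slot_rows_3 s)}}"
proof -
  consider "r = 0" | "r = 1" | "r = 2" using assms(1) by linarith
  then show ?thesis
  proof cases
    case 1 then show ?thesis using assms(2) by (intro three_le_card[of _ 0 2 3]) (simp_all add: slot_rows_3_def)
  next
    case 2 then show ?thesis using assms(2) by (intro three_le_card[of _ 1 2 4]) (simp_all add: slot_rows_3_def)
  next
    case 3 then show ?thesis using assms(2) by (intro three_le_card[of _ 0 1 3]) (simp_all add: slot_rows_3_def)
  qed
qed

lemma ex_pairing_3:
  assumes "even q" "4 \<le> q" "2 * n = 3 * q"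
  shows "\<exists>P. grid_pairing 3 q P \<and> thrice_covering 3 q P \<and> finite P \<and> card P = n"
proof (rule ex_pairing_of_slot_rows[where \<rho> = slot_rows_3 and T = "odd_triples 3 q"])
  have "num_slots q = (2 * n + 1) div 2" using assms(3) by (simp add: num_slots_def)
  then have slots: "num_slots q = n" "5 \<le> num_slots q" using assms(2,3) by simp_all
  then show "num_slots q \<le> n" by simp
  show "slot_rows_3 (s + 1) \<noteq> slot_rows_3 s" if "s mod 3 = 0" for s
    using that by (simp add: slot_rows_3_def mod_Suc)
  show "3 \<le> card {s \<in> {..<num_slots q}. r \<in> {fst (slot_rows_3 s), snd (slot_rows_3 s)}}" if "r < 3" for r
    using card_slots_rows_3[OF that slots(2)] .
  show "n \<le> card (odd_triples 3 q)" using card_odd_triples[of 3 q] assms(3) by simp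
qed (use assms slot_triple_rows_3_mem grid_pairing_odd_triples[of 3 q] finite_odd_triples in auto)

text \<open>For \<open>p = 5\<close> there is a single band \<open>{2, 3}\<close>: the slots \<open>0, \<dots>, 4\<close> and the last slot serve the
  gadget, and among the others those of the form \<open>3u + 1\<close> take the gadget pair \<open>(0, 4)\<close>, so that the
  two slots of a column always differ.\<close>

definition slot_rows_5 :: "nat \<Rightarrow> nat \<Rightarrow> nat \<times> nat" where
  "slot_rows_5 q s =
    (if s = num_slots q - 1 then (0, 1)
     else if s mod 3 = 2 then (2, 3)
     else if s mod 3 = 0 then (if s \<le> 3 then (0, 4) else (2, 3))
     else if s \<le> 4 then (4, 1) else (0, 4))"

lemma slot_triple_rows_5_mem:
  assumes "5 \<le> q" "s < num_slots q"
  shows "slot_triple (slot_rows_5 q) s \<in> odd_triples 5 q"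
proof -
  have "8 \<le> num_slots q" using assms(1) by (simp add: num_slots_def)
  let ?L = "num_slots q - 1"
  consider "s = ?L" | "s \<noteq> ?L" "s mod 3 = 2 \<or> (s mod 3 = 0 \<and> 3 < s)"
    | "s \<noteq> ?L" "s \<le> 4" "s mod 3 \<noteq> 2" | "s \<noteq> ?L" "4 < s" "s mod 3 = 1" by linarith
  then show ?thesis
  proof cases
    case 1
    then show ?thesis
      using slot_col_last[of q] assms(1) by (simp add: slot_triple_def slot_rows_5_def mem_odd_triples)
  next
    case 2
    then show ?thesis
      using slot_col_less[OF assms(2)] by (auto simp: slot_triple_def slot_rows_5_def mem_odd_triples)
  next
    case 3
    then have "s + 2 - s mod 3 \<le> 5" by (cases s rule: slot_cases) (simp_all add: slot_mod_simps)
    then have "slot_col s + 2 \<le> q"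
      using 3(3) \<open>8 \<le> num_slots q\<close> by (intro slot_col_add_two_le) simp_all
    then show ?thesis
      using 3 even_slot_col_iff[of s] by (auto simp: slot_triple_def slot_rows_5_def mem_odd_triples)
  next
    case 4
    then have "s + 2 - s mod 3 < num_slots q" using assms(2) by simp
    then have "slot_col s + 2 \<le> q" using 4(3) by (intro slot_col_add_two_le) simp_all
    then show ?thesis
      using 4 even_slot_col_iff[of s] by (auto simp: slot_triple_def slot_rows_5_def mem_odd_triples)
  qed
qed

lemma card_slots_rows_5:
  assumes "r < 5" "5 \<le> q"
  shows "3 \<le> card {s \<in> {..<num_slots q}. r \<in> {fst (slot_rows_5 q s), snd (slot_rows_5 q s)}}"
proof -
  let ?L = "num_slots q - 1"
  have L: "6 < ?L" "?L < num_slots q" using assms(2) by (simp_all add: num_slots_def)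
  consider "r = 0" | "r = 1" | "r = 2 \<or> r = 3" | "r = 4" using assms(1) by linarith
  then show ?thesis
  proof cases
    case 1 then show ?thesis using L by (intro three_le_card[of _ 0 3 ?L]) (auto simp: slot_rows_5_def)
  next
    case 2 then show ?thesis using L by (intro three_le_card[of _ 1 4 ?L]) (auto simp: slot_rows_5_def)
  next
    case 3 then show ?thesis using L by (intro three_le_card[of _ 2 5 6]) (auto simp: slot_rows_5_def)
  next
    case 4 then show ?thesis using L by (intro three_le_card[of _ 0 1 3]) (auto simp: slot_rows_5_def)
  qed
qed

lemma ex_pairing_5:
  assumes "5 \<le> q" "3 * q \<le> 2 * n" "2 * n \<le> 5 * q"
  shows "\<exists>P. grid_pairing 5 q P \<and> thrice_covering 5 q P \<and> finite P \<and> card P = n"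
proof (rule ex_pairing_of_slot_rows[where \<rho> = "slot_rows_5 q" and T = "odd_triples 5 q"])
  show "slot_rows_5 q (s + 1) \<noteq> slot_rows_5 q s" if "s mod 3 = 0" "s + 1 < num_slots q" for s
    using that by (auto simp: slot_rows_5_def mod_Suc)
  show "n \<le> card (odd_triples 5 q)" using card_odd_triples[of 5 q] assms(3) by simp
qed (use assms slot_triple_rows_5_mem card_slots_rows_5 grid_pairing_odd_triples[of 5 q]
      finite_odd_triples in \<open>auto simp: num_slots_def\<close>)

text \<open>For odd \<open>p \<ge> 7\<close> the slots \<open>0, \<dots>, 4\<close> serve the gadget and the remaining slots run cyclically
  through the \<open>(p - 3) / 2 \<ge> 2\<close> bands.\<close>

definition slot_band :: "nat \<Rightarrow> nat \<Rightarrow> nat" where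
  "slot_band p s = 1 + (s - 5) mod ((p - 3) div 2)"

definition slot_rows_odd :: "nat \<Rightarrow> nat \<Rightarrow> nat \<times> nat" where
  "slot_rows_odd p s =
    (if s = 0 \<or> s = 3 then (0, p - 1)
     else if s = 1 \<or> s = 4 then (p - 1, 1)
     else if s = 2 then (0, 1)
     else (2 * slot_band p s, 2 * slot_band p s + 1))"

lemma slot_band_bounds:
  assumes "7 \<le> p"
  shows "1 \<le> slot_band p s \<and> 2 * slot_band p s + 3 \<le> p"
proof -
  define G where "G = (p - 3) div 2"
  define X where "X = (s - 5) mod G"
  have "0 < G" using assms by (simp add: G_def)
  then have "X < G" by (simp add: X_def)
  moreover have "2 * G \<le> p - 3" unfolding G_def by (rule times_div_less_eq_dividend)
  moreover have "slot_band p s = 1 + X" by (simp add: slot_band_def G_def X_def)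
  ultimately show ?thesis using assms by linarith
qed

lemma slot_band_Suc:
  assumes "7 \<le> p" "5 \<le> s"
  shows "slot_band p (s + 1) \<noteq> slot_band p s"
proof -
  have "2 \<le> (p - 3) div 2" using assms(1) by simp
  then have "Suc m mod ((p - 3) div 2) \<noteq> m mod ((p - 3) div 2)" for m by (auto simp: mod_Suc)
  moreover have "s + 1 - 5 = Suc (s - 5)" using assms(2) by simp
  ultimately show ?thesis by (simp add: slot_band_def)
qed

lemma slot_band_cycle:
  assumes "odd p" "7 \<le> p" "1 \<le> i" "2 * i + 3 \<le> p"
  shows "slot_band p (4 + i + k * ((p - 3) div 2)) = i"
proof -
  let ?G = "(p - 3) div 2"
  have "i \<le> ?G" using assms(4) by (simp add: less_eq_div_iff_mult_less_eq)
  have e: "4 + i + k * ?G - 5 = (i - 1) + k * ?G" using assms(3) by simp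
  have "(4 + i + k * ?G - 5) mod ?G = (i - 1) mod ?G" unfolding e by (rule mod_mult_self1)
  also have "\<dots> = i - 1" using assms(3) \<open>i \<le> ?G\<close> by simp
  finally show ?thesis unfolding slot_band_def using assms(3) by linarith
qed

lemma slot_triple_rows_odd_mem:
  assumes "odd p" "7 \<le> p" "p \<le> q" "s < num_slots q"
  shows "slot_triple (slot_rows_odd p) s \<in> odd_triples p q"
proof (cases "s \<le> 4")
  case True
  then have "s = 0 \<or> s = 1 \<or> s = 2 \<or> s = 3 \<or> s = 4" by linarith
  then show ?thesis
    using assms(2,3) by (elim disjE) (simp_all add: slot_triple_def slot_rows_odd_def slot_col_def mem_odd_triples)
next
  case False
  then show ?thesis
    using slot_col_less[OF assms(4)] slot_band_bounds[OF assms(2), of s]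
    by (simp add: slot_triple_def slot_rows_odd_def mem_odd_triples)
qed

lemma card_slots_rows_odd:
  assumes "odd p" "7 \<le> p" "p \<le> q" "r < p"
  shows "3 \<le> card {s \<in> {..<num_slots q}. r \<in> {fst (slot_rows_odd p s), snd (slot_rows_odd p s)}}"
proof -
  let ?G = "(p - 3) div 2"
  have "2 * ?G + 3 = p" using assms(1,2) by (intro odd_bands_eq) simp_all
  then have slots: "3 * ?G + 5 \<le> num_slots q" using assms(3) by (simp add: num_slots_def)
  consider "r = 0" | "r = 1" | "r = p - 1" | "2 \<le> r" "r \<le> p - 2" using assms(4) by linarith
  then show ?thesis
  proof cases
    case 1
    then show ?thesis using slots by (intro three_le_card[of _ 0 2 3]) (simp_all add: slot_rows_odd_def)
  next
    case 2
    then show ?thesis using slots by (intro three_le_card[of _ 1 2 4]) (simp_all add: slot_rows_odd_def)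
  next
    case 3
    then show ?thesis using slots by (intro three_le_card[of _ 0 1 3]) (simp_all add: slot_rows_odd_def)
  next
    case 4
    define i where "i = r div 2"
    have r: "r = 2 * i \<or> r = 2 * i + 1"
      unfolding i_def by (cases "even r") (auto elim!: evenE oddE)
    obtain b where "p = 2 * b + 1" using assms(1) by (elim oddE)
    then have "i < b" using 4 r by linarith
    then have i: "1 \<le> i" "2 * i + 3 \<le> p" using 4 r \<open>p = 2 * b + 1\<close> by linarith+
    have "r \<in> {fst (slot_rows_odd p (4 + i + k * ?G)), snd (slot_rows_odd p (4 + i + k * ?G))}" for k
      using r i(1) slot_band_cycle[OF assms(1,2) i] by (auto simp: slot_rows_odd_def)
    from this[of 0] this[of 1] this[of 2] show ?thesis
      using slots i assms(2) by (intro three_le_card[of _ "4 + i" "4 + i + ?G" "4 + i + 2 * ?G"]) auto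
  qed
qed

lemma ex_pairing_odd_ge_7:
  assumes "odd p" "7 \<le> p" "p \<le> q" "3 * q \<le> 2 * n" "2 * n \<le> p * q"
  shows "\<exists>P. grid_pairing p q P \<and> thrice_covering p q P \<and> finite P \<and> card P = n"
proof (rule ex_pairing_of_slot_rows[where \<rho> = "slot_rows_odd p" and T = "odd_triples p q"])
  show "slot_rows_odd p (s + 1) \<noteq> slot_rows_odd p s" if "s mod 3 = 0" for s
    using that slot_band_Suc[OF assms(2), of s] by (auto simp: slot_rows_odd_def)
  show "n \<le> card (odd_triples p q)" using card_odd_triples[of p q] assms(1,2,5) by simp
qed (use assms slot_triple_rows_odd_mem card_slots_rows_odd grid_pairing_odd_triples[of p q]
      finite_odd_triples in \<open>auto simp: num_slots_def\<close>)

lemma ex_pairing_le: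
  assumes "3 \<le> p" "p \<le> q" "3 * q \<le> 2 * n" "2 * n \<le> p * q"
  shows "\<exists>P. grid_pairing p q P \<and> thrice_covering p q P \<and> finite P \<and> card P = n"
proof -
  have "p = 3 \<or> p = 5 \<or> 7 \<le> p" if "odd p"
    using that assms(1) by (elim oddE) (auto simp: le_Suc_eq)
  then consider "even p" | "p = 3" | "p = 5" | "odd p" "7 \<le> p" by blast
  then show ?thesis
  proof cases
    case 1
    moreover have "p \<noteq> 3" using 1 by auto
    then have "4 \<le> p" using assms(1) by simp
    ultimately show ?thesis using assms(2-4) by (rule ex_pairing_even)
  next
    case 2
    then have n: "2 * n = 3 * q" using assms(3,4) by simp
    then have "q = 2 * (n - q)" by linarith
    then have "even q" by (metis dvd_triv_left)
    then have "4 \<le> q" using 2 assms(2) by (cases "q = 3") auto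
    with n \<open>even q\<close> show ?thesis using ex_pairing_3 2 by blast
  next
    case 3
    then show ?thesis using assms(2-4) ex_pairing_5 by simp
  next
    case 4
    then show ?thesis using assms(2-4) by (rule ex_pairing_odd_ge_7)
  qed
qed

lemma ex_grid_pairing:
  assumes "3 \<le> p" "3 \<le> q" "3 * max p q \<le> 2 * n" "2 * n \<le> p * q"
  shows "\<exists>P. grid_pairing p q P \<and> thrice_covering p q P \<and> finite P \<and> card P = n"
proof (cases "p \<le> q")
  case True
  then show ?thesis using assms by (intro ex_pairing_le) (simp_all add: max_def)
next
  case False
  then obtain P where P: "grid_pairing q p P" "thrice_covering q p P" "finite P" "card P = n"
    using assms ex_pairing_le[of q p n] by (auto simp: max_def mult.commute)
  then show ?thesis
    using grid_pairing_transpose[OF P(1)] thrice_covering_transpose[OF P(2)]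
    by (intro exI[of _ "transpose_pair ` P"]) (simp add: card_image inj_on_subset[OF inj_transpose_pair])
qed

lemma ex_resolving_total_dominating_KKK:
  assumes "3 \<le> p" "3 \<le> q" "3 * max p q \<le> 2 * n" "2 * n \<le> p * q"
  shows "\<exists>W. resolving (KKK_verts (p + 1) (q + 1) (n + 1)) KKK_adj W \<and>
    total_dominating (KKK_verts (p + 1) (q + 1) (n + 1)) KKK_adj W \<and> card W = 2 * n + 1"
proof -
  obtain P where P: "grid_pairing p q P" "thrice_covering p q P" "finite P" "card P = n"
    using ex_grid_pairing[OF assms] by blast
  then obtain g where "bij_betw g {..<n} P"
    using ex_bij_betw_nat_finite[OF P(3)] by (auto simp: atLeast0LessThan)
  then interpret enumerated_pairing p q n P g
    using P by unfold_locales
  have "3 \<le> n" using assms(1,3) by simp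
  then show ?thesis
    using assms(1,2) resolving_pairing_set total_dominating_pairing_set card_pairing_set by auto
qed

theorem mainTheorem12:
  fixes n1 n2 n3 :: nat
  assumes "3 \<le> n1" and "3 \<le> n2" and "n1 \<le> n3" and "n2 \<le> n3"
    and "3 * max n1 n2 \<le> 2 * n3" and "2 * n3 \<le> n1 * n2"
  shows "metric_dim (KKK_verts (n1+1) (n2+1) (n3+1)) KKK_adj = 2 * (n3 + 1) - 1
       \<and> loc_dom_number (KKK_verts (n1+1) (n2+1) (n3+1)) KKK_adj = 2 * (n3 + 1) - 1
       \<and> loc_tdom_number (KKK_verts (n1+1) (n2+1) (n3+1)) KKK_adj = 2 * (n3 + 1) - 1"
proof -
  let ?V = "KKK_verts (n1+1) (n2+1) (n3+1)"
  have lower: "2 * (n3 + 1) - 1 \<le> card W" if "resolving ?V KKK_adj W" for W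
    using card_resolving_KKK_ge[OF _ _ _ that] assms(1,2,4) by simp
  obtain W where "resolving ?V KKK_adj W" "total_dominating ?V KKK_adj W" "card W = 2 * (n3 + 1) - 1"
    using ex_resolving_total_dominating_KKK[OF assms(1,2,5,6)] by auto
  then show ?thesis
    unfolding metric_dim_def loc_dom_number_def loc_tdom_number_def
    using lower total_dominating_imp_dominating by (intro conjI Inf_card_eq[of _ W]) auto
qed

end
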